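(* Let $m, N, T$ be positive integers, let $\gamma \in [0,1)$, and let $a_1,\ldots,a_N \in [0,1]$ and $b_1,\ldots,b_N \in [0,1]$ satisfy $\sum_{j=1}^N a_j = 1$ and $\sum_{j=1}^N b_j = 1$. Put $$q(z) = a_1 + a_2 z + \cdots + a_N z^{N-1}, \qquad p(z) = b_1 z + b_2 z^2 + \cdots + b_N z^N,$$ $$\Phi(z) = (1-\gamma)^T \frac{z\,(q(z))^T}{(1-\gamma p(z))^T}.$$ Let $\mu_1,\ldots,\mu_m \in \mathbb{C}$ and consider the polynomial in $\lambda$ $$\tilde f(\lambda) = \prod_{j=1}^m \Big( \big[\lambda^N - \gamma \lambda^N p(\lambda^{-1})\big]^T - (1-\gamma)^T \mu_j \lambda^{T-1} \big[\lambda^{N-1} q(\lambda^{-1})\big]^T \Big).$$ Then all roots of $\tilde f$ lie in the open unit disc $D = \{z \in \mathbb{C} : |z| < 1\}$ if and only if $$\mu_j \in \big(\overline{\mathbb{C}} \setminus \Phi(\overline{D})\big)^*, \qquad j = 1,\ldots,m,$$ where $\overline{D} = \{z \in \mathbb{C} : |z| \le 1\}$.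
   Context: $\overline{\mathbb{C}} = \mathbb{C} \cup \{\infty\}$ denotes the extended complex plane. For a set $S \subseteq \overline{\mathbb{C}}$, $S^* = \{ z^* : z \in S\}$, where the inversion is $z^* = 1/\bar z$ ($\bar z$ the complex conjugate), with the conventions $0^* = \infty$ and $\infty^* = 0$. Here $\lambda^N p(\lambda^{-1})$ and $\lambda^{N-1} q(\lambda^{-1})$ denote the polynomials $b_1\lambda^{N-1} + \cdots + b_N$ and $a_1 \lambda^{N-1} + \cdots + a_N$, respectively. *)

theory Defs
  imports "HOL-Analysis.Analysis" "HOL-Computational_Algebra.Polynomial"
begin

text \<open>Extended complex plane: None represents \<infinity>, Some z the finite point z.\<close>
type_synonym ecomplex = "complex option"

definition ext_inv :: "ecomplex \<Rightarrow> ecomplex" where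
  "ext_inv z = (case z of None \<Rightarrow> Some 0
               | Some w \<Rightarrow> (if w = 0 then None else Some (1 / cnj w)))"

definition qfun :: "nat \<Rightarrow> (nat \<Rightarrow> real) \<Rightarrow> complex \<Rightarrow> complex" where
  "qfun N a z = (\<Sum>j=1..N. complex_of_real (a j) * z ^ (j - 1))"

definition pfun :: "nat \<Rightarrow> (nat \<Rightarrow> real) \<Rightarrow> complex \<Rightarrow> complex" where
  "pfun N b z = (\<Sum>j=1..N. complex_of_real (b j) * z ^ j)"

definition Phi :: "nat \<Rightarrow> nat \<Rightarrow> real \<Rightarrow> (nat \<Rightarrow> real) \<Rightarrow> (nat \<Rightarrow> real) \<Rightarrow> complex \<Rightarrow> complex" where
  "Phi N T \<gamma> a b z = complex_of_real ((1 - \<gamma>) ^ T) * z * (qfun N a z) ^ T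
                       / (1 - complex_of_real \<gamma> * pfun N b z) ^ T"

text \<open>\<lambda>^N p(\<lambda>^{-1}) = b_1 \<lambda>^(N-1) + ... + b_N, as a polynomial\<close>
definition prev_poly :: "nat \<Rightarrow> (nat \<Rightarrow> real) \<Rightarrow> complex poly" where
  "prev_poly N b = (\<Sum>j=1..N. monom (complex_of_real (b j)) (N - j))"

text \<open>\<lambda>^(N-1) q(\<lambda>^{-1}) = a_1 \<lambda>^(N-1) + ... + a_N, as a polynomial\<close>
definition qrev_poly :: "nat \<Rightarrow> (nat \<Rightarrow> real) \<Rightarrow> complex poly" where
  "qrev_poly N a = (\<Sum>j=1..N. monom (complex_of_real (a j)) (N - j))"

definition ftilde :: "nat \<Rightarrow> nat \<Rightarrow> nat \<Rightarrow> real \<Rightarrow> (nat \<Rightarrow> real) \<Rightarrow> (nat \<Rightarrow> real)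
                      \<Rightarrow> (nat \<Rightarrow> complex) \<Rightarrow> complex poly" where
  "ftilde m N T \<gamma> a b \<mu> =
     (\<Prod>j=1..m. (monom 1 N - smult (complex_of_real \<gamma>) (prev_poly N b)) ^ T
                - smult (complex_of_real ((1 - \<gamma>) ^ T) * \<mu> j)
                    (monom 1 (T - 1) * (qrev_poly N a) ^ T))"

end

theory Submission
  imports Defs
begin

text \<open>Substituting \<open>\<lambda> = 1/z\<close>, a factor of \<open>f~\<close> vanishes at \<open>\<lambda>\<close> exactly when
  \<open>(1 - \<gamma> p(z))\<^sup>T = \<mu> (1-\<gamma>)\<^sup>T z q(z)\<^sup>T\<close>. For \<open>|z| \<le> 1\<close> the left side is nonzero
  because \<open>|\<gamma> p(z)| \<le> \<gamma> < 1\<close>, so this is equivalent to \<open>\<mu> \<noteq> 0\<close> and \<open>\<Phi>(z) = 1/\<mu>\<close>.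
  Hence a factor has a root with \<open>|\<lambda>| \<ge> 1\<close> iff \<open>1/\<mu> \<in> \<Phi>(cball 0 1)\<close>, and since
  \<open>\<Phi>\<close> has real coefficients this is the same as \<open>1/cnj \<mu> \<in> \<Phi>(cball 0 1)\<close>, i.e.
  \<open>\<mu> \<notin> (\<Phi>(cball 0 1))\<^sup>*\<close>.\<close>

definition ftilde_factor ::
    "nat \<Rightarrow> nat \<Rightarrow> real \<Rightarrow> (nat \<Rightarrow> real) \<Rightarrow> (nat \<Rightarrow> real) \<Rightarrow> complex \<Rightarrow> complex poly" where
  "ftilde_factor N T \<gamma> a b u =
     (monom 1 N - smult (complex_of_real \<gamma>) (prev_poly N b)) ^ T
     - smult (complex_of_real ((1 - \<gamma>) ^ T) * u) (monom 1 (T - 1) * (qrev_poly N a) ^ T)"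

lemma ftilde_eq_prod_factor: "ftilde m N T \<gamma> a b \<mu> = (\<Prod>j=1..m. ftilde_factor N T \<gamma> a b (\<mu> j))"
  unfolding ftilde_def ftilde_factor_def by simp

lemma pfun_eq_mult_qfun: "pfun N c z = z * qfun N c z"
proof -
  have "pfun N c z = (\<Sum>j=1..N. z * (complex_of_real (c j) * z ^ (j - 1)))"
    unfolding pfun_def by (intro sum.cong) (auto simp: power_eq_if)
  then show ?thesis unfolding qfun_def by (simp add: sum_distrib_left)
qed

lemma qrev_poly_eq_prev_poly: "qrev_poly N c = prev_poly N c"
  unfolding qrev_poly_def prev_poly_def ..

lemma poly_prev_poly_inverse:
  assumes "z \<noteq> 0"
  shows "poly (prev_poly N c) (1 / z) = (1 / z) ^ N * pfun N c z"
proof -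
  have "poly (prev_poly N c) (1 / z) = (\<Sum>j=1..N. (1 / z) ^ N * (complex_of_real (c j) * z ^ j))"
    unfolding prev_poly_def poly_sum
  proof (rule sum.cong[OF refl])
    fix j assume "j \<in> {1..N}"
    then have "(1 / z) ^ N = (1 / z) ^ (N - j) * (1 / z) ^ j"
      by (simp add: power_add[symmetric])
    then show "poly (monom (complex_of_real (c j)) (N - j)) (1 / z)
             = (1 / z) ^ N * (complex_of_real (c j) * z ^ j)"
      using assms by (simp add: poly_monom power_divide field_simps)
  qed
  then show ?thesis unfolding pfun_def by (simp add: sum_distrib_left)
qed

lemma poly_ftilde_factor_inverse:
  assumes "z \<noteq> 0" and "T > 0"
  shows "poly (ftilde_factor N T \<gamma> a b u) (1 / z) = (1 / z) ^ (N * T) *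
     ((1 - complex_of_real \<gamma> * pfun N b z) ^ T
      - u * (complex_of_real ((1 - \<gamma>) ^ T) * z * qfun N a z ^ T))"
proof -
  define w where "w = 1 / z"
  have wz: "w * z = 1" using assms(1) by (simp add: w_def)
  have "w ^ (T - 1) = w ^ T * z"
    using assms wz by (cases T) (simp_all add: algebra_simps)
  then have "w ^ (T - 1) * (w ^ N * (z * qfun N a z)) ^ T = w ^ (N * T) * (w * z) ^ T * (z * qfun N a z ^ T)"
    by (simp add: power_mult_distrib power_mult algebra_simps)
  then have Q: "w ^ (T - 1) * (w ^ N * (z * qfun N a z)) ^ T = w ^ (N * T) * (z * qfun N a z ^ T)"
    by (simp add: wz)
  have P: "(w ^ N - complex_of_real \<gamma> * (w ^ N * pfun N b z)) ^ T
         = w ^ (N * T) * (1 - complex_of_real \<gamma> * pfun N b z) ^ T"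
    by (simp add: power_mult power_mult_distrib[symmetric] algebra_simps)
  have "poly (ftilde_factor N T \<gamma> a b u) w
      = (w ^ N - complex_of_real \<gamma> * (w ^ N * pfun N b z)) ^ T
        - complex_of_real ((1 - \<gamma>) ^ T) * u * (w ^ (T - 1) * (w ^ N * (z * qfun N a z)) ^ T)"
    unfolding ftilde_factor_def qrev_poly_eq_prev_poly w_def
    using assms(1) by (simp add: poly_monom poly_prev_poly_inverse pfun_eq_mult_qfun)
  then show ?thesis
    unfolding w_def[symmetric] P Q by (simp add: algebra_simps)
qed

lemma norm_pfun_le:
  assumes "\<And>j. j \<in> {1..N} \<Longrightarrow> 0 \<le> c j" and "cmod z \<le> 1"
  shows "cmod (pfun N c z) \<le> (\<Sum>j=1..N. c j)"
proof -
  have "cmod (pfun N c z) \<le> (\<Sum>j=1..N. cmod (complex_of_real (c j) * z ^ j))"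
    unfolding pfun_def by (rule norm_sum)
  also have "\<dots> \<le> (\<Sum>j=1..N. c j)"
  proof (rule sum_mono)
    fix j assume j: "j \<in> {1..N}"
    have "cmod z ^ j \<le> 1" using assms(2) by (simp add: power_le_one)
    then show "cmod (complex_of_real (c j) * z ^ j) \<le> c j"
      using assms(1)[OF j] by (simp add: norm_mult norm_power mult_left_le)
  qed
  finally show ?thesis .
qed

lemma one_minus_pfun_nonzero:
  assumes "\<And>j. j \<in> {1..N} \<Longrightarrow> 0 \<le> c j" and "(\<Sum>j=1..N. c j) \<le> 1"
    and "\<bar>\<gamma>\<bar> < 1" and "cmod z \<le> 1"
  shows "1 - complex_of_real \<gamma> * pfun N c z \<noteq> 0"
proof
  assume "1 - complex_of_real \<gamma> * pfun N c z = 0"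
  then have "1 = cmod (complex_of_real \<gamma> * pfun N c z)" by (simp add: right_minus_eq)
  also have "\<dots> = \<bar>\<gamma>\<bar> * cmod (pfun N c z)" by (simp add: norm_mult)
  also have "\<dots> \<le> \<bar>\<gamma>\<bar>"
    using norm_pfun_le[of N c z] assms(1,2,4) by (simp add: mult_left_le)
  finally show False using assms(3) by simp
qed

lemma eq_mult_iff_divide_eq_inverse:
  fixes E K u :: "'a :: field"
  assumes "E \<noteq> 0"
  shows "E = u * K \<longleftrightarrow> u \<noteq> 0 \<and> K / E = 1 / u"
  using assms by (auto simp: field_simps)

lemma ftilde_factor_root_inverse_iff:
  assumes "z \<noteq> 0" and "T > 0" and "1 - complex_of_real \<gamma> * pfun N b z \<noteq> 0"
  shows "poly (ftilde_factor N T \<gamma> a b u) (1 / z) = 0 \<longleftrightarrow> u \<noteq> 0 \<and> Phi N T \<gamma> a b z = 1 / u"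
  using eq_mult_iff_divide_eq_inverse[OF power_not_zero[OF assms(3)], where u = u]
  unfolding poly_ftilde_factor_inverse[OF assms(1,2)] Phi_def
  by (simp add: assms(1) mult.assoc)

lemma ftilde_factor_roots_in_disc_iff:
  assumes "T > 0" and "\<And>j. j \<in> {1..N} \<Longrightarrow> 0 \<le> b j" and "(\<Sum>j=1..N. b j) \<le> 1"
    and "\<bar>\<gamma>\<bar> < 1"
  shows "(\<forall>x. poly (ftilde_factor N T \<gamma> a b u) x = 0 \<longrightarrow> cmod x < 1) \<longleftrightarrow>
         u = 0 \<or> 1 / u \<notin> Phi N T \<gamma> a b ` cball 0 1"
proof -
  have root_iff: "poly (ftilde_factor N T \<gamma> a b u) (1 / z) = 0 \<longleftrightarrow> u \<noteq> 0 \<and> Phi N T \<gamma> a b z = 1 / u"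
    if "z \<noteq> 0" "cmod z \<le> 1" for z
    using ftilde_factor_root_inverse_iff[OF that(1) assms(1)]
      one_minus_pfun_nonzero[OF assms(2-4) that(2)] by blast
  have "(\<exists>x. poly (ftilde_factor N T \<gamma> a b u) x = 0 \<and> \<not> cmod x < 1) \<longleftrightarrow>
        (\<exists>z. z \<noteq> 0 \<and> cmod z \<le> 1 \<and> poly (ftilde_factor N T \<gamma> a b u) (1 / z) = 0)"
  proof
    assume "\<exists>x. poly (ftilde_factor N T \<gamma> a b u) x = 0 \<and> \<not> cmod x < 1"
    then obtain x where "poly (ftilde_factor N T \<gamma> a b u) x = 0" "cmod x \<ge> 1" by auto
    then show "\<exists>z. z \<noteq> 0 \<and> cmod z \<le> 1 \<and> poly (ftilde_factor N T \<gamma> a b u) (1 / z) = 0"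
      by (intro exI[of _ "1 / x"]) (auto simp: norm_divide divide_le_eq)
  qed (auto simp: norm_divide le_divide_eq)
  also have "\<dots> \<longleftrightarrow> u \<noteq> 0 \<and> 1 / u \<in> Phi N T \<gamma> a b ` cball 0 1"
  proof
    assume "\<exists>z. z \<noteq> 0 \<and> cmod z \<le> 1 \<and> poly (ftilde_factor N T \<gamma> a b u) (1 / z) = 0"
    then show "u \<noteq> 0 \<and> 1 / u \<in> Phi N T \<gamma> a b ` cball 0 1"
      using root_iff by (metis image_eqI mem_cball_0)
  next
    assume "u \<noteq> 0 \<and> 1 / u \<in> Phi N T \<gamma> a b ` cball 0 1"
    then obtain z where "cmod z \<le> 1" "Phi N T \<gamma> a b z = 1 / u" "u \<noteq> 0" by auto
    moreover have "z \<noteq> 0" using calculation by (auto simp: Phi_def)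
    ultimately show "\<exists>z. z \<noteq> 0 \<and> cmod z \<le> 1 \<and> poly (ftilde_factor N T \<gamma> a b u) (1 / z) = 0"
      using root_iff by blast
  qed
  finally show ?thesis by auto
qed

lemma cnj_Phi: "cnj (Phi N T \<gamma> a b z) = Phi N T \<gamma> a b (cnj z)"
  unfolding Phi_def qfun_def pfun_def by (simp add: cnj_sum)

lemma inverse_cnj_in_Phi_cball_iff:
  "1 / cnj u \<in> Phi N T \<gamma> a b ` cball 0 1 \<longleftrightarrow> 1 / u \<in> Phi N T \<gamma> a b ` cball 0 1"
proof -
  have "cnj ` Phi N T \<gamma> a b ` cball 0 1 = Phi N T \<gamma> a b ` cball 0 1"
    by (force simp: image_image cnj_Phi intro: image_eqI[of _ _ "cnj z" for z])
  then show ?thesis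
    by (metis (no_types, lifting) complex_cnj_cnj complex_cnj_divide complex_cnj_one image_eqI
        image_iff)
qed

lemma Some_in_ext_inv_compl_iff:
  "Some u \<in> ext_inv ` (UNIV - Some ` S) \<longleftrightarrow> u = 0 \<or> 1 / cnj u \<notin> S"
proof
  assume "Some u \<in> ext_inv ` (UNIV - Some ` S)"
  then obtain w where w: "w \<notin> Some ` S" "Some u = ext_inv w" by auto
  show "u = 0 \<or> 1 / cnj u \<notin> S"
  proof (cases w)
    case None then show ?thesis using w by (simp add: ext_inv_def)
  next
    case (Some v)
    then have "v = 1 / cnj u" using w by (auto simp: ext_inv_def split: if_splits)
    then show ?thesis using w Some by auto
  qed
next
  assume "u = 0 \<or> 1 / cnj u \<notin> S"
  then show "Some u \<in> ext_inv ` (UNIV - Some ` S)"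
    by (cases "u = 0")
      (auto simp: ext_inv_def intro: image_eqI[of _ _ None] image_eqI[of _ _ "Some (1 / cnj u)"])
qed

theorem lemma3:
  fixes m N T :: nat and \<gamma> :: real and a b :: "nat \<Rightarrow> real" and \<mu> :: "nat \<Rightarrow> complex"
  assumes "m > 0" and "N > 0" and "T > 0"
    and "0 \<le> \<gamma>" and "\<gamma> < 1"
    and "\<And>j. j \<in> {1..N} \<Longrightarrow> 0 \<le> a j \<and> a j \<le> 1"
    and "\<And>j. j \<in> {1..N} \<Longrightarrow> 0 \<le> b j \<and> b j \<le> 1"
    and "(\<Sum>j=1..N. a j) = 1" and "(\<Sum>j=1..N. b j) = 1"
  shows "(\<forall>z. poly (ftilde m N T \<gamma> a b \<mu>) z = 0 \<longrightarrow> cmod z < 1) \<longleftrightarrow>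
         (\<forall>j\<in>{1..m}. Some (\<mu> j) \<in>
            ext_inv ` (UNIV - Some ` (Phi N T \<gamma> a b ` cball 0 1)))"
proof -
  have factor_iff: "(\<forall>x. poly (ftilde_factor N T \<gamma> a b u) x = 0 \<longrightarrow> cmod x < 1) \<longleftrightarrow>
      u = 0 \<or> 1 / cnj u \<notin> Phi N T \<gamma> a b ` cball 0 1" for u
    using ftilde_factor_roots_in_disc_iff[OF assms(3)] assms(4,5,7,9)
    by (simp add: inverse_cnj_in_Phi_cball_iff)
  have "(\<forall>z. poly (ftilde m N T \<gamma> a b \<mu>) z = 0 \<longrightarrow> cmod z < 1) \<longleftrightarrow>
        (\<forall>j\<in>{1..m}. \<forall>z. poly (ftilde_factor N T \<gamma> a b (\<mu> j)) z = 0 \<longrightarrow> cmod z < 1)"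
    unfolding ftilde_eq_prod_factor poly_prod by auto
  then show ?thesis
    by (simp add: factor_iff Some_in_ext_inv_compl_iff)
qed

end
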